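(* Let $G$ be a finitely generated group whose growth function satisfies $\gamma_G(n)\succcurlyeq 2^{n^{\alpha}}$ for some $\alpha\in(0,1]$. Then $\mathrm{WP}_G\notin\mathrm{DTIME}_1(o(n^{1+\alpha}))$.
   Context: The growth function $\gamma_G(n)$ is the number of elements of word length at most $n$ with respect to a finite symmetric generating set. For nondecreasing functions, $f\succcurlyeq g$ means there is $C>0$ with $g(n)\le f(Cn)$ for all $n$. $\mathrm{WP}_G$ is the word problem $\{w\in S^{*}: w=_G e\}$; $\mathrm{DTIME}_1(o(t(n)))$ is the class of languages decided in time $o(t(n))$ by a deterministic single-tape Turing machine. *)

theory Defs
  imports "HOL-Algebra.Generated_Groups" "HOL-Library.Landau_Symbols"
begin

definition eval_word :: "('a, 'b) monoid_scheme \<Rightarrow> 'a list \<Rightarrow> 'a" where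
  "eval_word G w = foldr (\<lambda>s g. s \<otimes>\<^bsub>G\<^esub> g) w \<one>\<^bsub>G\<^esub>"

definition fin_sym_gen_set :: "('a, 'b) monoid_scheme \<Rightarrow> 'a set \<Rightarrow> bool" where
  "fin_sym_gen_set G S \<longleftrightarrow> finite S \<and> S \<subseteq> carrier G
     \<and> (\<forall>s\<in>S. inv\<^bsub>G\<^esub> s \<in> S) \<and> generate G S = carrier G"

definition growth :: "('a, 'b) monoid_scheme \<Rightarrow> 'a set \<Rightarrow> nat \<Rightarrow> nat" where
  "growth G S n = card {g. \<exists>w\<in>lists S. length w \<le> n \<and> eval_word G w = g}"

definition dominates :: "(nat \<Rightarrow> real) \<Rightarrow> (nat \<Rightarrow> real) \<Rightarrow> bool" where
  "dominates f g \<longleftrightarrow> (\<exists>C::nat. C > 0 \<and> (\<forall>n. g n \<le> f (C * n)))"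

definition word_problem :: "('a, 'b) monoid_scheme \<Rightarrow> 'a set \<Rightarrow> 'a list set" where
  "word_problem G S = {w \<in> lists S. eval_word G w = \<one>\<^bsub>G\<^esub>}"

text \<open>Tape symbols are of type 'a + nat: input letters Inl s (s in the input
  alphabet), blank Inr 0, further work symbols Inr k. A machine is a tuple
  (Q, Gamma, delta, q0, qacc, qrej); delta q c = (q', c', d) with head move
  d \<in> {-1,0,1}.\<close>

type_synonym 'a tm =
  "nat set \<times> ('a + nat) set \<times> (nat \<Rightarrow> 'a + nat \<Rightarrow> nat \<times> ('a + nat) \<times> int) \<times> nat \<times> nat \<times> nat"

type_synonym 'a config = "nat \<times> (int \<Rightarrow> 'a + nat) \<times> int"

definition blank :: "'a + nat" where "blank = Inr 0"

definition wf_tm :: "'a set \<Rightarrow> 'a tm \<Rightarrow> bool" where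
  "wf_tm \<Sigma> M = (case M of (Q, \<Gamma>, \<delta>, q0, qa, qr) \<Rightarrow>
     finite Q \<and> finite \<Gamma> \<and> q0 \<in> Q \<and> qa \<in> Q \<and> qr \<in> Q \<and> qa \<noteq> qr
     \<and> blank \<in> \<Gamma> \<and> Inl ` \<Sigma> \<subseteq> \<Gamma>
     \<and> (\<forall>q\<in>Q. \<forall>c\<in>\<Gamma>. case \<delta> q c of (q', c', d) \<Rightarrow>
            q' \<in> Q \<and> c' \<in> \<Gamma> \<and> d \<in> {-1, 0, 1}))"

definition initial_config :: "'a tm \<Rightarrow> 'a list \<Rightarrow> 'a config" where
  "initial_config M w = (case M of (Q, \<Gamma>, \<delta>, q0, qa, qr) \<Rightarrow>
     (q0, (\<lambda>i. if 0 \<le> i \<and> nat i < length w then Inl (w ! nat i) else blank), 0))"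

definition tm_step :: "'a tm \<Rightarrow> 'a config \<Rightarrow> 'a config" where
  "tm_step M c = (case M of (Q, \<Gamma>, \<delta>, q0, qa, qr) \<Rightarrow>
     (case c of (q, tp, h) \<Rightarrow>
        if q = qa \<or> q = qr then c
        else (case \<delta> q (tp h) of (q', c', d) \<Rightarrow> (q', tp(h := c'), h + d))))"

definition tm_run :: "'a tm \<Rightarrow> 'a list \<Rightarrow> nat \<Rightarrow> 'a config" where
  "tm_run M w k = (tm_step M ^^ k) (initial_config M w)"

definition decides_in_time ::
    "'a set \<Rightarrow> 'a tm \<Rightarrow> 'a list set \<Rightarrow> (nat \<Rightarrow> nat) \<Rightarrow> bool" where
  "decides_in_time \<Sigma> M L T \<longleftrightarrow> wf_tm \<Sigma> M \<and>
     (\<forall>w\<in>lists \<Sigma>. case M of (Q, \<Gamma>, \<delta>, q0, qa, qr) \<Rightarrow>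
        fst (tm_run M w (T (length w))) = (if w \<in> L then qa else qr))"

definition DTIME1_o :: "'a set \<Rightarrow> (nat \<Rightarrow> real) \<Rightarrow> 'a list set set" where
  "DTIME1_o \<Sigma> t = {L. L \<subseteq> lists \<Sigma> \<and> (\<exists>M T. decides_in_time \<Sigma> M L T
        \<and> (\<lambda>n. real (T n)) \<in> o(t))}"

end

theory Submission
  imports Defs
begin

text \<open>A crossing-sequence argument in the style of Hennie. Let A be a set of words of a common
  length k \<in> {m, m - 1} representing distinct group elements, with |A| \<ge> \<gamma>(m)/2, and let P be a word
  of length 2m representing the identity. Then u P v^-1 (u, v \<in> A) represents the identity iff
  u = v, so by cut and paste a decider has pairwise distinct crossing sequences on the inputs
  u P u^-1 at each of the 2m + 1 boundaries inside P. Fewer than (|Q| + 1)^K sequences are shorter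
  than K, so if (|Q| + 1)^K \<le> \<gamma>(m)/4 most of these inputs cross each of those boundaries at least
  K times, and as every step crosses at most one boundary, some input of length about 4m needs
  time at least m K. With \<gamma>(m) \<ge> 2^(n^\<alpha>) for m = C n one can take K of order n^\<alpha>, which gives
  time of order n^(1+\<alpha>) and contradicts T \<in> o(n^(1+\<alpha>)).\<close>

definition cstate :: "'a config \<Rightarrow> nat" where "cstate c = fst c"
definition ctape :: "'a config \<Rightarrow> int \<Rightarrow> 'a + nat" where "ctape c = fst (snd c)"
definition chead :: "'a config \<Rightarrow> int" where "chead c = snd (snd c)"

lemma config_sel [simp]: "cstate (q, tp, h) = q" "ctape (q, tp, h) = tp" "chead (q, tp, h) = h"
  by (simp_all add: cstate_def ctape_def chead_def)

lemma tm_step_eq: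
  "tm_step (Q, \<Gamma>, \<delta>, q0, qa, qr) (q, tp, h) = (if q = qa \<or> q = qr then (q, tp, h) else
     (fst (\<delta> q (tp h)), tp(h := fst (snd (\<delta> q (tp h)))), h + snd (snd (\<delta> q (tp h)))))"
  by (simp add: tm_step_def split: prod.split)

definition is_run :: "'a tm \<Rightarrow> (nat \<Rightarrow> 'a config) \<Rightarrow> bool" where
  "is_run M r \<longleftrightarrow> (\<forall>t. r (Suc t) = tm_step M (r t))"

lemma is_run_tm_run: "is_run M (tm_run M w)"
  by (simp add: is_run_def tm_run_def)

lemma tm_step_halted:
  assumes "M = (Q, \<Gamma>, \<delta>, q0, qa, qr)" "cstate c = qa \<or> cstate c = qr"
  shows "tm_step M c = c"
  using assms by (cases c) (auto simp: tm_step_eq)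

lemma is_run_halted_stable:
  assumes M: "M = (Q, \<Gamma>, \<delta>, q0, qa, qr)" and r: "is_run M r"
    and halted: "cstate (r T) = qa \<or> cstate (r T) = qr" and "T \<le> t"
  shows "r t = r T"
  using \<open>T \<le> t\<close>
proof (induction t rule: dec_induct)
  case (step t)
  then show ?case using r halted tm_step_halted[OF M] unfolding is_run_def by metis
qed simp

lemma tm_step_local:
  assumes "M = (Q, \<Gamma>, \<delta>, q0, qa, qr)" "cstate c = cstate c'" "chead c = chead c'"
    "ctape c (chead c) = ctape c' (chead c)"
  shows "cstate (tm_step M c) = cstate (tm_step M c') \<and> chead (tm_step M c) = chead (tm_step M c') \<and>
    (\<exists>v. ctape (tm_step M c) = (ctape c)(chead c := v) \<and> ctape (tm_step M c') = (ctape c')(chead c := v))"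
proof -
  obtain q tp h where c: "c = (q, tp, h)" by (cases c)
  obtain q' tp' h' where c': "c' = (q', tp', h')" by (cases c')
  show ?thesis using assms unfolding c c'
    by (auto simp: tm_step_eq) (metis fun_upd_triv)+
qed

lemma tm_step_tape_other:
  assumes "M = (Q, \<Gamma>, \<delta>, q0, qa, qr)" "x \<noteq> chead c"
  shows "ctape (tm_step M c) x = ctape c x"
  using tm_step_local[OF assms(1), of c c] assms(2) by auto

lemma is_run_tape_untouched:
  assumes M: "M = (Q, \<Gamma>, \<delta>, q0, qa, qr)" and r: "is_run M r" and "a \<le> c"
    and visited: "\<forall>t. a \<le> t \<and> t < c \<longrightarrow> P (chead (r t))" and "\<not> P x"
  shows "ctape (r c) x = ctape (r a) x"
  using \<open>a \<le> c\<close> visited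
proof (induction c rule: dec_induct)
  case (step n)
  then have "x \<noteq> chead (r n)" using \<open>\<not> P x\<close> by auto
  then show ?case using step tm_step_tape_other[OF M] r unfolding is_run_def
    by (metis less_Suc_eq order.refl le_SucI)
qed simp

lemma tm_run_in_alphabet:
  assumes M: "M = (Q, \<Gamma>, \<delta>, q0, qa, qr)" and wf: "wf_tm \<Sigma> M" and w: "w \<in> lists \<Sigma>"
  shows "cstate (tm_run M w t) \<in> Q \<and> (\<forall>i. ctape (tm_run M w t) i \<in> \<Gamma>)"
proof (induction t)
  case 0
  have "w ! nat i \<in> \<Sigma>" if "0 \<le> i \<and> nat i < length w" for i
    using w that by (meson in_listsD nth_mem)
  then show ?case using M wf by (auto simp: tm_run_def initial_config_def wf_tm_def)
next
  case (Suc t)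
  obtain q tp h where c: "tm_run M w t = (q, tp, h)" by (cases "tm_run M w t")
  have q: "q \<in> Q" and g: "\<And>i. tp i \<in> \<Gamma>" using Suc c by auto
  have "case \<delta> q (tp h) of (q', c', d) \<Rightarrow> q' \<in> Q \<and> c' \<in> \<Gamma> \<and> d \<in> {-1, 0, 1}"
    using M wf q g by (auto simp: wf_tm_def)
  then show ?case using c q g M
    by (auto simp: tm_run_def tm_step_eq split: prod.splits)
qed

lemma tm_run_head_move:
  assumes M: "M = (Q, \<Gamma>, \<delta>, q0, qa, qr)" and wf: "wf_tm \<Sigma> M" and w: "w \<in> lists \<Sigma>"
  shows "\<bar>chead (tm_run M w (Suc t)) - chead (tm_run M w t)\<bar> \<le> 1"
proof -
  obtain q tp h where c: "tm_run M w t = (q, tp, h)" by (cases "tm_run M w t")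
  have q: "q \<in> Q" and g: "\<And>i. tp i \<in> \<Gamma>" using tm_run_in_alphabet[OF assms, of t] c by auto
  have "case \<delta> q (tp h) of (q', c', d) \<Rightarrow> q' \<in> Q \<and> c' \<in> \<Gamma> \<and> d \<in> {-1, 0, 1}"
    using M wf q g by (auto simp: wf_tm_def)
  then show ?thesis using c M
    by (auto simp: tm_run_def tm_step_eq split: prod.splits)
qed

section \<open>Crossing sequences\<close>

text \<open>The boundary b lies between the cells b - 1 and b.\<close>

definition crosses :: "int \<Rightarrow> (nat \<Rightarrow> 'a config) \<Rightarrow> nat \<Rightarrow> bool" where
  "crosses b r t \<longleftrightarrow> (chead (r t) < b) \<noteq> (chead (r (Suc t)) < b)"

fun crossings :: "int \<Rightarrow> (nat \<Rightarrow> 'a config) \<Rightarrow> nat \<Rightarrow> nat" where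
  "crossings b r 0 = 0"
| "crossings b r (Suc t) = crossings b r t + (if crosses b r t then 1 else 0)"

definition crossing_seq :: "int \<Rightarrow> (nat \<Rightarrow> 'a config) \<Rightarrow> nat \<Rightarrow> nat list" where
  "crossing_seq b r T = map (\<lambda>t. cstate (r (Suc t))) (filter (crosses b r) [0..<T])"

lemma length_crossing_seq: "length (crossing_seq b r T) = crossings b r T"
  by (induction T) (auto simp: crossing_seq_def)

lemma crossings_mono: "t \<le> t' \<Longrightarrow> crossings b r t \<le> crossings b r t'"
  by (induction t' rule: dec_induct) auto

lemma crossings_less: "crosses b r t \<Longrightarrow> t < T \<Longrightarrow> crossings b r t < crossings b r T"
  using crossings_mono[of "Suc t" T b r] by auto

lemma nth_crossing_seq:
  "crosses b r t \<Longrightarrow> t < T \<Longrightarrow> crossing_seq b r T ! crossings b r t = cstate (r (Suc t))"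
proof (induction T)
  case (Suc T)
  have eq: "crossing_seq b r (Suc T) = crossing_seq b r T @ (if crosses b r T then [cstate (r (Suc T))] else [])"
    by (simp add: crossing_seq_def)
  show ?case
  proof (cases "t < T")
    case True
    then have "crossings b r t < length (crossing_seq b r T)"
      using Suc.prems crossings_less length_crossing_seq by metis
    then show ?thesis using Suc True eq by (simp add: nth_append)
  next
    case False
    then have "t = T" using Suc.prems by simp
    then show ?thesis using Suc.prems eq length_crossing_seq[of b r T] by (simp add: nth_append)
  qed
qed simp

lemma crossings_attained: "j < crossings b r T \<Longrightarrow> \<exists>t<T. crosses b r t \<and> crossings b r t = j"
proof (induction T)
  case (Suc T)
  show ?case
  proof (cases "j < crossings b r T")
    case True then show ?thesis using Suc by (meson less_SucI)
  next
    case False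
    then have "crosses b r T" "j = crossings b r T" using Suc.prems by (auto split: if_splits)
    then show ?thesis by auto
  qed
qed simp

lemma next_crossing:
  assumes "j = crossings b r k" "j < crossings b r T"
  obtains t where "k \<le> t" "t < T" "crosses b r t" "\<forall>s. k \<le> s \<and> s \<le> t \<longrightarrow> crossings b r s = j"
proof -
  obtain t where t: "t < T" "crosses b r t" "crossings b r t = j"
    using crossings_attained[OF assms(2)] by blast
  have "k \<le> t"
  proof (rule ccontr)
    assume "\<not> k \<le> t"
    then have "crossings b r (Suc t) \<le> crossings b r k" by (intro crossings_mono) simp
    then show False using t assms(1) by simp
  qed
  moreover have "crossings b r s = j" if "k \<le> s" "s \<le> t" for s
    using crossings_mono[OF that(1), of b r] crossings_mono[OF that(2), of b r] t(3) assms(1) by simp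
  ultimately show thesis using that t by blast
qed

text \<open>Below, inn is one of the two half-lines cut off by the boundary b, so that both sides of
  the tape are handled by a single argument.\<close>

lemma crosses_iff_side_change:
  assumes "inn = (\<lambda>c. c < b) \<or> inn = (\<lambda>c. \<not> c < b)"
  shows "crosses b r t \<longleftrightarrow> inn (chead (r t)) \<noteq> inn (chead (r (Suc t)))"
  using assms by (auto simp: crosses_def)

lemma side_parity:
  assumes "inn = (\<lambda>c. c < b) \<or> inn = (\<lambda>c. \<not> c < b)"
  shows "inn (chead (r t)) \<longleftrightarrow> (inn (chead (r 0)) \<longleftrightarrow> even (crossings b r t))"
  using assms by (induction t) (auto simp: crosses_def)

lemma half_line_exit_unique:
  assumes "inn = (\<lambda>c. c < (b::int)) \<or> inn = (\<lambda>c. \<not> c < b)"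
    "inn h" "\<not> inn h'" "\<bar>h' - h\<bar> \<le> 1" "inn g" "\<not> inn g'" "\<bar>g' - g\<bar> \<le> 1"
  shows "h' = g'"
  using assms by auto

lemma halted_not_crosses:
  assumes "M = (Q, \<Gamma>, \<delta>, q0, qa, qr)" "is_run M r" "cstate (r t) = qa \<or> cstate (r t) = qr"
  shows "\<not> crosses b r t"
  using assms tm_step_halted[OF assms(1)] unfolding is_run_def crosses_def by metis

lemma crosses_before_halting:
  assumes M: "M = (Q, \<Gamma>, \<delta>, q0, qa, qr)" and r: "is_run M r"
    and halted: "cstate (r T) = qa \<or> cstate (r T) = qr" and "crosses b r t"
  shows "t < T"
proof (rule ccontr)
  assume "\<not> t < T"
  then have "r t = r T" using is_run_halted_stable[OF M r halted, of t] by simp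
  then show False using halted_not_crosses[OF M r, of t b] halted \<open>crosses b r t\<close> by simp
qed

lemma crosses_boundary_eq:
  assumes "crosses b r t" "\<bar>chead (r (Suc t)) - chead (r t)\<bar> \<le> 1"
  shows "b = max (chead (r t)) (chead (r (Suc t)))"
  using assms unfolding crosses_def by auto

text \<open>Each step crosses at most one boundary.\<close>

lemma sum_crossings_le:
  assumes "inj_on f I" "finite I" "\<forall>t. \<bar>chead (r (Suc t)) - chead (r t)\<bar> \<le> 1"
  shows "(\<Sum>i\<in>I. crossings (f i) r T) \<le> T"
proof (induction T)
  case (Suc T)
  have "card {i\<in>I. crosses (f i) r T} \<le> 1"
  proof -
    have "f i = f j" if "i \<in> {i\<in>I. crosses (f i) r T}" "j \<in> {i\<in>I. crosses (f i) r T}" for i j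
      using that crosses_boundary_eq[of "f i" r T] crosses_boundary_eq[of "f j" r T] assms(3) by simp
    then show ?thesis using assms(1,2) card_le_Suc0_iff_eq[of "{i\<in>I. crosses (f i) r T}"]
      by (auto dest: inj_onD)
  qed
  moreover have "(\<Sum>i\<in>I. crossings (f i) r (Suc T))
      = (\<Sum>i\<in>I. crossings (f i) r T) + card {i\<in>I. crosses (f i) r T}"
    using sum.inter_filter[OF assms(2), of "\<lambda>_. 1::nat" "\<lambda>i. crosses (f i) r T"]
    by (simp add: sum.distrib)
  ultimately show ?case using Suc by linarith
qed simp

lemma run_leaves_side:
  assumes M: "M = (Q, \<Gamma>, \<delta>, q0, qa, qr)" and r: "is_run M r"
    and side: "inn = (\<lambda>c. c < b) \<or> inn = (\<lambda>c. \<not> c < b)"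
    and inside: "inn (chead (r k))" and more: "crossings b r k < crossings b r T"
  obtains t where "k \<le> t" "t < T" "crosses b r t" "crossings b r t = crossings b r k"
    "inn (chead (r t))" "\<not> inn (chead (r (Suc t)))"
    "\<forall>c. \<not> inn c \<longrightarrow> ctape (r (Suc t)) c = ctape (r k) c"
proof -
  obtain t where t: "k \<le> t" "t < T" "crosses b r t"
    and same: "\<forall>s. k \<le> s \<and> s \<le> t \<longrightarrow> crossings b r s = crossings b r k"
    by (rule next_crossing[OF refl more])
  have stays: "inn (chead (r s))" if "k \<le> s" "s \<le> t" for s
  proof -
    have "crossings b r s = crossings b r k" using same that by blast
    then show ?thesis using side_parity[OF side, of r s] side_parity[OF side, of r k] inside by metis
  qed
  have tape: "\<forall>c. \<not> inn c \<longrightarrow> ctape (r (Suc t)) c = ctape (r k) c"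
    using is_run_tape_untouched[OF M r, of k "Suc t" inn] stays t(1) by auto
  have "inn (chead (r t))" using stays t(1) by simp
  moreover have "\<not> inn (chead (r (Suc t)))"
    using \<open>inn (chead (r t))\<close> t(3) crosses_iff_side_change[OF side, of r t] by simp
  moreover have "crossings b r t = crossings b r k" using same t(1) by blast
  ultimately show thesis using that[OF t _ _ _ tape] by blast
qed

section \<open>Cut and paste\<close>

text \<open>Let r1, r2 be runs and r a run that starts like r1 on the side inn of the boundary b and
  like r2 on the other side. If r1 and r2 have the same crossing sequence at b, then r is
  simulated by r1 while its head is on the side inn and by r2 while it is on the other side: r
  leaves inn in the state recorded in the crossing sequence, which is the state in which r2
  enters its own side. The invariant describes the situation after k steps of r, k1 steps of
  r1 and k2 steps of r2; as k \<le> k1 + k2, after T1 + T2 steps r has caught up with a simulating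
  run that has already halted.\<close>

definition cut_paste_inv ::
  "(int \<Rightarrow> bool) \<Rightarrow> int \<Rightarrow> (nat \<Rightarrow> 'a config) \<Rightarrow> (nat \<Rightarrow> 'a config) \<Rightarrow> nat \<Rightarrow>
    (nat \<Rightarrow> 'a config) \<Rightarrow> nat \<Rightarrow> nat \<Rightarrow> nat \<Rightarrow> nat \<Rightarrow> bool" where
  "cut_paste_inv inn b r r1 T1 r2 T2 k k1 k2 \<longleftrightarrow>
     crossings b r k = crossings b r1 k1 \<and> crossings b r k = crossings b r2 k2 \<and> k \<le> k1 + k2
     \<and> (\<forall>c. inn c \<longrightarrow> ctape (r k) c = ctape (r1 k1) c)
     \<and> (\<forall>c. \<not> inn c \<longrightarrow> ctape (r k) c = ctape (r2 k2) c)
     \<and> (if inn (chead (r k))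
        then cstate (r k) = cstate (r1 k1) \<and> chead (r k) = chead (r1 k1) \<and> k2 \<le> T2
        else cstate (r k) = cstate (r2 k2) \<and> chead (r k) = chead (r2 k2) \<and> k1 \<le> T1)"

lemma is_run_lockstep:
  assumes M: "M = (Q, \<Gamma>, \<delta>, q0, qa, qr)" and runs: "is_run M r" "is_run M r'"
    and agree: "cstate (r k) = cstate (r' k')" "chead (r k) = chead (r' k')"
      "\<forall>c. inn c \<longrightarrow> ctape (r k) c = ctape (r' k') c"
    and inside: "inn (chead (r k))"
  shows "cstate (r (Suc k)) = cstate (r' (Suc k'))" "chead (r (Suc k)) = chead (r' (Suc k'))"
    "\<forall>c. inn c \<longrightarrow> ctape (r (Suc k)) c = ctape (r' (Suc k')) c"
    "\<forall>c. \<not> inn c \<longrightarrow> ctape (r (Suc k)) c = ctape (r k) c"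
proof -
  have "ctape (r k) (chead (r k)) = ctape (r' k') (chead (r k))" using agree(3) inside by blast
  with tm_step_local[OF M, of "r k" "r' k'"] agree(1,2) runs
  obtain v where "ctape (r (Suc k)) = (ctape (r k))(chead (r k) := v)"
      "ctape (r' (Suc k')) = (ctape (r' k'))(chead (r k) := v)"
    and "cstate (r (Suc k)) = cstate (r' (Suc k'))" "chead (r (Suc k)) = chead (r' (Suc k'))"
    unfolding is_run_def by metis
  then show "cstate (r (Suc k)) = cstate (r' (Suc k'))" "chead (r (Suc k)) = chead (r' (Suc k'))"
    "\<forall>c. inn c \<longrightarrow> ctape (r (Suc k)) c = ctape (r' (Suc k')) c"
    "\<forall>c. \<not> inn c \<longrightarrow> ctape (r (Suc k)) c = ctape (r k) c"
    using agree(3) inside by auto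
qed

lemma cut_paste_inv_swap:
  "cut_paste_inv inn b r r1 T1 r2 T2 k k1 k2 \<longleftrightarrow> cut_paste_inv (\<lambda>c. \<not> inn c) b r r2 T2 r1 T1 k k2 k1"
  unfolding cut_paste_inv_def by auto

lemma cut_paste_inv_step:
  assumes M: "M = (Q, \<Gamma>, \<delta>, q0, qa, qr)"
    and runs: "is_run M r" "is_run M r1" "is_run M r2"
    and moves: "\<forall>t. \<bar>chead (r (Suc t)) - chead (r t)\<bar> \<le> 1" "\<forall>t. \<bar>chead (r2 (Suc t)) - chead (r2 t)\<bar> \<le> 1"
    and start: "chead (r 0) = chead (r2 0)"
    and side: "inn = (\<lambda>c. c < b) \<or> inn = (\<lambda>c. \<not> c < b)"
    and accept: "cstate (r1 T1) = qa"
    and cs: "crossing_seq b r1 T1 = crossing_seq b r2 T2"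
    and g: "cut_paste_inv inn b r r1 T1 r2 T2 k k1 k2"
    and inside: "inn (chead (r k))"
  shows "\<exists>k1' k2'. cut_paste_inv inn b r r1 T1 r2 T2 (Suc k) k1' k2'"
proof -
  have g': "crossings b r k = crossings b r1 k1" "crossings b r k = crossings b r2 k2" "k \<le> k1 + k2"
    "\<forall>c. inn c \<longrightarrow> ctape (r k) c = ctape (r1 k1) c" "\<forall>c. \<not> inn c \<longrightarrow> ctape (r k) c = ctape (r2 k2) c"
    "cstate (r k) = cstate (r1 k1)" "chead (r k) = chead (r1 k1)" "k2 \<le> T2"
    using g inside unfolding cut_paste_inv_def by auto
  note new = is_run_lockstep[OF M runs(1,2) g'(6,7,4) inside]
  have tape_out: "\<forall>c. \<not> inn c \<longrightarrow> ctape (r (Suc k)) c = ctape (r2 k2) c" using new(4) g'(5) by simp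
  show ?thesis
  proof (cases "inn (chead (r (Suc k)))")
    case True
    have "\<not> crosses b r k" using True inside crosses_iff_side_change[OF side, of r k] by simp
    moreover have "\<not> crosses b r1 k1"
      using True inside g' new(2) crosses_iff_side_change[OF side, of r1 k1] by simp
    ultimately have "cut_paste_inv inn b r r1 T1 r2 T2 (Suc k) (Suc k1) k2"
      using True tape_out new(1-3) g' unfolding cut_paste_inv_def by simp
    then show ?thesis by blast
  next
    case False
    have cross: "crosses b r k" "crosses b r1 k1"
      using False crosses_iff_side_change[OF side, of r k] crosses_iff_side_change[OF side, of r1 k1] inside g' new(2) by auto
    have "k1 < T1" using crosses_before_halting[OF M runs(2) _ cross(2)] accept by simp
    have "inn (chead (r2 k2))"
      using side_parity[OF side, of r2 k2] side_parity[OF side, of r k] inside start g' by simp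
    moreover have "crossings b r2 k2 < crossings b r2 T2"
      using crossings_less[OF cross(2) \<open>k1 < T1\<close>] g' cs length_crossing_seq[of b r1 T1]
      by (simp add: length_crossing_seq)
    ultimately obtain t2 where t2: "k2 \<le> t2" "t2 < T2" "crosses b r2 t2" "crossings b r2 t2 = crossings b r2 k2"
      and inside2: "inn (chead (r2 t2))" "\<not> inn (chead (r2 (Suc t2)))"
      and tape_out': "\<forall>c. \<not> inn c \<longrightarrow> ctape (r2 (Suc t2)) c = ctape (r2 k2) c"
      by (rule run_leaves_side[OF M runs(3) side])
    have head: "chead (r2 (Suc t2)) = chead (r (Suc k))"
      using half_line_exit_unique[OF side inside2 _ inside False] moves(1)[rule_format, of k]
        moves(2)[rule_format, of t2] by simp
    have "cstate (r1 (Suc k1)) = cstate (r2 (Suc t2))"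
      using nth_crossing_seq[OF cross(2) \<open>k1 < T1\<close>] nth_crossing_seq[OF t2(3,2)] cs t2(4) g'(1,2)
      by simp
    moreover have "crossings b r (Suc k) = crossings b r1 (Suc k1)"
      "crossings b r (Suc k) = crossings b r2 (Suc t2)"
      using cross t2 g'(1,2) by auto
    moreover have "\<forall>c. \<not> inn c \<longrightarrow> ctape (r (Suc k)) c = ctape (r2 (Suc t2)) c"
      using tape_out tape_out' by simp
    moreover have "Suc k \<le> Suc k1 + Suc t2" using g' t2(1) by simp
    ultimately have "cut_paste_inv inn b r r1 T1 r2 T2 (Suc k) (Suc k1) (Suc t2)"
      using False new(1,3) head \<open>k1 < T1\<close> unfolding cut_paste_inv_def by simp
    then show ?thesis by blast
  qed
qed

lemma cut_paste_inv_exists: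
  assumes M: "M = (Q, \<Gamma>, \<delta>, q0, qa, qr)"
    and runs: "is_run M r" "is_run M r1" "is_run M r2"
    and moves: "\<forall>t. \<bar>chead (r (Suc t)) - chead (r t)\<bar> \<le> 1" "\<forall>t. \<bar>chead (r1 (Suc t)) - chead (r1 t)\<bar> \<le> 1"
      "\<forall>t. \<bar>chead (r2 (Suc t)) - chead (r2 t)\<bar> \<le> 1"
    and start: "chead (r 0) = chead (r1 0)" "chead (r 0) = chead (r2 0)"
    and accept: "cstate (r1 T1) = qa" "cstate (r2 T2) = qa"
    and cs: "crossing_seq b r1 T1 = crossing_seq b r2 T2"
    and init: "cut_paste_inv (\<lambda>c. c < b) b r r1 T1 r2 T2 0 0 0"
  shows "\<exists>k1 k2. cut_paste_inv (\<lambda>c. c < b) b r r1 T1 r2 T2 k k1 k2"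
proof (induction k)
  case (Suc k)
  then obtain k1 k2 where g: "cut_paste_inv (\<lambda>c. c < b) b r r1 T1 r2 T2 k k1 k2" by blast
  show ?case
  proof (cases "chead (r k) < b")
    case True
    show ?thesis by (rule cut_paste_inv_step[OF M runs moves(1,3) start(2) _ accept(1) cs g True]) simp
  next
    case False
    have "\<exists>k2' k1'. cut_paste_inv (\<lambda>c. \<not> c < b) b r r2 T2 r1 T1 (Suc k) k2' k1'"
      by (rule cut_paste_inv_step[OF M runs(1,3,2) moves(1,2) start(1) _ accept(2) cs[symmetric]
            cut_paste_inv_swap[THEN iffD1, OF g] False]) simp
    then show ?thesis using cut_paste_inv_swap[of "\<lambda>c. c < b"] by blast
  qed
qed (use init in blast)

lemma cut_and_paste:
  assumes M: "M = (Q, \<Gamma>, \<delta>, q0, qa, qr)" and wf: "wf_tm \<Sigma> M"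
    and words: "x1 \<in> lists \<Sigma>" "y1 \<in> lists \<Sigma>" "x2 \<in> lists \<Sigma>" "y2 \<in> lists \<Sigma>"
    and len: "length x1 = length x2"
    and accept1: "cstate (tm_run M (x1 @ y1) T1) = qa"
    and accept2: "cstate (tm_run M (x2 @ y2) T2) = qa"
    and cs: "crossing_seq (int (length x1)) (tm_run M (x1 @ y1)) T1
      = crossing_seq (int (length x1)) (tm_run M (x2 @ y2)) T2"
  shows "cstate (tm_run M (x1 @ y2) (T1 + T2)) = qa"
proof -
  define b where "b = int (length x1)"
  define r r1 r2 where "r = tm_run M (x1 @ y2)" and "r1 = tm_run M (x1 @ y1)" and "r2 = tm_run M (x2 @ y2)"
  have runs: "is_run M r" "is_run M r1" "is_run M r2"
    unfolding r_def r1_def r2_def by (simp_all add: is_run_tm_run)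
  have moves: "\<forall>t. \<bar>chead (r (Suc t)) - chead (r t)\<bar> \<le> 1" "\<forall>t. \<bar>chead (r1 (Suc t)) - chead (r1 t)\<bar> \<le> 1"
      "\<forall>t. \<bar>chead (r2 (Suc t)) - chead (r2 t)\<bar> \<le> 1"
    unfolding r_def r1_def r2_def using tm_run_head_move[OF M wf] words by auto
  have start: "chead (r 0) = chead (r1 0)" "chead (r 0) = chead (r2 0)"
    "cstate (r 0) = cstate (r1 0)" "cstate (r 0) = cstate (r2 0)"
    unfolding r_def r1_def r2_def by (simp_all add: M tm_run_def initial_config_def)
  have "\<forall>c. c < b \<longrightarrow> ctape (r 0) c = ctape (r1 0) c" "\<forall>c. \<not> c < b \<longrightarrow> ctape (r 0) c = ctape (r2 0) c"
    unfolding r_def r1_def r2_def b_def using len by (auto simp: M tm_run_def initial_config_def nth_append)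
  then have "cut_paste_inv (\<lambda>c. c < b) b r r1 T1 r2 T2 0 0 0"
    unfolding cut_paste_inv_def using start by simp
  moreover have "cstate (r1 T1) = qa" "cstate (r2 T2) = qa"
    "crossing_seq b r1 T1 = crossing_seq b r2 T2"
    using accept1 accept2 cs unfolding r1_def r2_def b_def by simp_all
  ultimately obtain k1 k2 where g: "cut_paste_inv (\<lambda>c. c < b) b r r1 T1 r2 T2 (T1 + T2) k1 k2"
    using cut_paste_inv_exists[OF M runs moves start(1,2)] by blast
  show ?thesis
  proof (cases "chead (r (T1 + T2)) < b")
    case True
    with g have "T1 \<le> k1" "cstate (r (T1 + T2)) = cstate (r1 k1)" unfolding cut_paste_inv_def by auto
    then show ?thesis
      using is_run_halted_stable[OF M runs(2), of T1 k1] accept1 unfolding r_def r1_def by simp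
  next
    case False
    with g have "T2 \<le> k2" "cstate (r (T1 + T2)) = cstate (r2 k2)" unfolding cut_paste_inv_def by auto
    then show ?thesis
      using is_run_halted_stable[OF M runs(3), of T2 k2] accept2 unfolding r_def r2_def by simp
  qed
qed

section \<open>Lower bounds from fooling sets\<close>

lemma card_lists_shorter_le:
  assumes "finite Q" "Q \<noteq> {}"
  shows "card {xs. set xs \<subseteq> Q \<and> length xs < K} \<le> (card Q + 1) ^ K"
proof (induction K)
  case (Suc K)
  have "{xs. set xs \<subseteq> Q \<and> length xs < Suc K}
      = {xs. set xs \<subseteq> Q \<and> length xs < K} \<union> {xs. set xs \<subseteq> Q \<and> length xs = K}"
    by auto
  then have "card {xs. set xs \<subseteq> Q \<and> length xs < Suc K}
      \<le> card {xs. set xs \<subseteq> Q \<and> length xs < K} + card {xs. set xs \<subseteq> Q \<and> length xs = K}"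
    by (simp add: card_Un_le)
  also have "\<dots> \<le> (card Q + 1) ^ K + card Q ^ K"
    using Suc.IH card_lists_length_eq[OF assms(1)] by simp
  also have "card Q ^ K \<le> card Q * (card Q + 1) ^ K"
  proof -
    have "card Q ^ K \<le> (card Q + 1) ^ K" by (simp add: power_mono)
    also have "\<dots> \<le> card Q * (card Q + 1) ^ K" using assms by (simp add: Suc_leI card_gt_0_iff)
    finally show ?thesis .
  qed
  finally show ?case by simp
qed simp

lemma sum_length_ge_if_inj_on:
  assumes "finite A" "inj_on f A" "\<forall>u\<in>A. set (f u) \<subseteq> Q" "finite Q" "Q \<noteq> {}"
  shows "K * (card A - (card Q + 1) ^ K) \<le> (\<Sum>u\<in>A. length (f u))"
proof -
  define B where "B = {u\<in>A. length (f u) < K}"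
  have B: "B \<subseteq> A" "finite B" using assms(1) unfolding B_def by auto
  have "card B = card (f ` B)"
    using inj_on_subset[OF assms(2) B(1)] by (simp add: card_image)
  also have "\<dots> \<le> card {xs. set xs \<subseteq> Q \<and> length xs < K}"
  proof (rule card_mono)
    show "finite {xs. set xs \<subseteq> Q \<and> length xs < K}"
      using finite_lists_length_le[OF assms(4), of K] by (rule finite_subset[rotated]) auto
    show "f ` B \<subseteq> {xs. set xs \<subseteq> Q \<and> length xs < K}" using assms(3) by (auto simp: B_def)
  qed
  also have "\<dots> \<le> (card Q + 1) ^ K" by (rule card_lists_shorter_le[OF assms(4,5)])
  finally have "card A - (card Q + 1) ^ K \<le> card (A - B)"
    using card_Diff_subset[OF B(2,1)] by linarith
  then have "K * (card A - (card Q + 1) ^ K) \<le> K * card (A - B)" by simp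
  also have "\<dots> = (\<Sum>u\<in>A - B. K)" by simp
  also have "\<dots> \<le> (\<Sum>u\<in>A - B. length (f u))" by (rule sum_mono) (auto simp: B_def)
  also have "\<dots> \<le> (\<Sum>u\<in>A. length (f u))"
    using assms(1) by (intro sum_mono2) auto
  finally show ?thesis .
qed

lemma decides_in_time_state:
  assumes "decides_in_time \<Sigma> M L T" "M = (Q, \<Gamma>, \<delta>, q0, qa, qr)" "w \<in> lists \<Sigma>"
  shows "cstate (tm_run M w (T (length w))) = (if w \<in> L then qa else qr)"
  using assms unfolding decides_in_time_def cstate_def by auto

lemma crossing_seq_inj_on_fooling_set:
  assumes dec: "decides_in_time \<Sigma> M L T" and M: "M = (Q, \<Gamma>, \<delta>, q0, qa, qr)"
    and words: "\<forall>u\<in>A. x u \<in> lists \<Sigma> \<and> length (x u) = m \<and> y u \<in> lists \<Sigma> \<and> length (y u) = m'"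
    and fooling: "\<forall>u\<in>A. \<forall>v\<in>A. x u @ y v \<in> L \<longleftrightarrow> u = v"
  shows "inj_on (\<lambda>u. crossing_seq (int m) (tm_run M (x u @ y u)) (T (m + m'))) A"
proof (rule inj_onI, rule ccontr)
  fix u v
  assume uv: "u \<in> A" "v \<in> A" "u \<noteq> v"
    and cs: "crossing_seq (int m) (tm_run M (x u @ y u)) (T (m + m'))
      = crossing_seq (int m) (tm_run M (x v @ y v)) (T (m + m'))"
  have wf: "wf_tm \<Sigma> M" using dec by (simp add: decides_in_time_def)
  define t where "t = T (m + m')"
  have lists: "x u' \<in> lists \<Sigma>" "y u' \<in> lists \<Sigma>" and len: "length (x u') = m" "length (y u') = m'"
    if "u' \<in> A" for u' using words that by auto
  have state: "cstate (tm_run M (x u' @ y v') t) = (if u' = v' then qa else qr)"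
    if "u' \<in> A" "v' \<in> A" for u' v'
    using decides_in_time_state[OF dec M, of "x u' @ y v'"] fooling that lists len unfolding t_def by simp
  have "crossing_seq (int (length (x u))) (tm_run M (x u @ y u)) t
      = crossing_seq (int (length (x u))) (tm_run M (x v @ y v)) t"
    using cs len(1)[OF uv(1)] unfolding t_def by simp
  from cut_and_paste[OF M wf lists(1,2)[OF uv(1)] lists(1,2)[OF uv(2)] _ _ _ this]
  have "cstate (tm_run M (x u @ y v) (t + t)) = qa"
    using len(1) uv state by simp
  moreover have "tm_run M (x u @ y v) (t + t) = tm_run M (x u @ y v) t"
    using is_run_halted_stable[OF M is_run_tm_run, of "x u @ y v" t "t + t"] state[OF uv(1,2)] by simp
  ultimately show False using state[OF uv(1,2)] uv(3) wf M by (simp add: wf_tm_def)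
qed

text \<open>The classical crossing-sequence bound: every boundary inside the common middle part z
  separates a fooling set, so most words of A have long crossing sequences there, while each
  step of the machine contributes to only one crossing sequence.\<close>

lemma fooling_set_time_bound:
  assumes dec: "decides_in_time \<Sigma> M L T" and M: "M = (Q, \<Gamma>, \<delta>, q0, qa, qr)" and "finite A"
    and words: "\<forall>u\<in>A. x u \<in> lists \<Sigma> \<and> length (x u) = m \<and> y u \<in> lists \<Sigma> \<and> length (y u) = m'"
    and z: "z \<in> lists \<Sigma>" and fooling: "\<forall>u\<in>A. \<forall>v\<in>A. x u @ z @ y v \<in> L \<longleftrightarrow> u = v"
  shows "(length z + 1) * (K * (card A - (card Q + 1) ^ K)) \<le> card A * T (m + length z + m')"
proof -
  have wf: "wf_tm \<Sigma> M" using dec by (simp add: decides_in_time_def)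
  have Q: "finite Q" "Q \<noteq> {}" using wf M by (auto simp: wf_tm_def)
  define n where "n = m + length z + m'"
  define cs where "cs i u = crossing_seq (int (m + i)) (tm_run M (x u @ z @ y u)) (T n)" for i u
  have wu: "x u @ z @ y u \<in> lists \<Sigma>" if "u \<in> A" for u using words z that by simp
  have inj_cs: "inj_on (cs i) A" if "i \<le> length z" for i
  proof -
    have split: "take i z @ drop i z @ ys = z @ ys" for ys by (metis append_assoc append_take_drop_id)
    have "inj_on (\<lambda>u. crossing_seq (int (m + i)) (tm_run M ((x u @ take i z) @ (drop i z @ y u)))
        (T ((m + i) + (length z - i + m')))) A"
      using words z fooling that
      by (intro crossing_seq_inj_on_fooling_set[OF dec M]) (auto simp: split dest: in_set_takeD in_set_dropD)
    then show ?thesis using that unfolding cs_def n_def by (simp add: split add.assoc)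
  qed
  have set_cs: "set (cs i u) \<subseteq> Q" if "u \<in> A" for i u
    using tm_run_in_alphabet[OF M wf wu[OF that]] unfolding cs_def crossing_seq_def by auto
  have "K * (card A - (card Q + 1) ^ K) \<le> (\<Sum>u\<in>A. length (cs i u))" if "i \<le> length z" for i
    by (rule sum_length_ge_if_inj_on[OF \<open>finite A\<close> inj_cs[OF that] _ Q]) (simp add: set_cs)
  then have "(length z + 1) * (K * (card A - (card Q + 1) ^ K)) \<le> (\<Sum>i\<le>length z. \<Sum>u\<in>A. length (cs i u))"
    using sum_mono[of "{..length z}" "\<lambda>_. K * (card A - (card Q + 1) ^ K)"] by simp
  also have "\<dots> = (\<Sum>u\<in>A. \<Sum>i\<le>length z. crossings (int (m + i)) (tm_run M (x u @ z @ y u)) (T n))"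
    unfolding cs_def length_crossing_seq by (rule sum.swap)
  also have "\<dots> \<le> (\<Sum>u\<in>A. T n)"
  proof (rule sum_mono)
    fix u assume "u \<in> A"
    show "(\<Sum>i\<le>length z. crossings (int (m + i)) (tm_run M (x u @ z @ y u)) (T n)) \<le> T n"
      by (rule sum_crossings_le) (auto simp: inj_on_def tm_run_head_move[OF M wf wu[OF \<open>u \<in> A\<close>]])
  qed
  finally show ?thesis unfolding n_def by simp
qed

section \<open>Words in a group\<close>

lemma eval_word_Nil [simp]: "eval_word G [] = \<one>\<^bsub>G\<^esub>"
  and eval_word_Cons [simp]: "eval_word G (s # w) = s \<otimes>\<^bsub>G\<^esub> eval_word G w"
  by (simp_all add: eval_word_def)

lemma (in monoid) eval_word_closed [intro, simp]: "set w \<subseteq> carrier G \<Longrightarrow> eval_word G w \<in> carrier G"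
  by (induction w) auto

lemma (in monoid) eval_word_append:
  "set u \<subseteq> carrier G \<Longrightarrow> set v \<subseteq> carrier G \<Longrightarrow> eval_word G (u @ v) = eval_word G u \<otimes> eval_word G v"
  by (induction u) (auto simp: m_assoc)

definition inv_word :: "('a, 'b) monoid_scheme \<Rightarrow> 'a list \<Rightarrow> 'a list" where
  "inv_word G u = rev (map (m_inv G) u)"

lemma length_inv_word [simp]: "length (inv_word G u) = length u"
  by (simp add: inv_word_def)

lemma inv_word_in_lists: "\<forall>s\<in>S. inv\<^bsub>G\<^esub> s \<in> S \<Longrightarrow> u \<in> lists S \<Longrightarrow> inv_word G u \<in> lists S"
  by (auto simp: inv_word_def)

lemma (in group) eval_inv_word:
  "set u \<subseteq> carrier G \<Longrightarrow> eval_word G (inv_word G u) = inv (eval_word G u)"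
proof (induction u)
  case (Cons s u)
  have "eval_word G (inv_word G (s # u)) = eval_word G (inv_word G u @ [inv s])"
    by (simp add: inv_word_def)
  also have "\<dots> = inv (eval_word G u) \<otimes> inv s"
  proof -
    have "set (inv_word G u) \<subseteq> carrier G" using Cons.prems by (auto simp: inv_word_def)
    then show ?thesis using Cons by (simp add: eval_word_append)
  qed
  finally show ?case using Cons.prems by (simp add: inv_mult_group)
qed (simp add: inv_word_def)

lemma (in group) word_problem_append_inv_word_iff:
  assumes S: "S \<subseteq> carrier G" "\<forall>s\<in>S. inv s \<in> S"
    and words: "u \<in> lists S" "v \<in> lists S" "z \<in> lists S" and z: "eval_word G z = \<one>"
  shows "u @ z @ inv_word G v \<in> word_problem G S \<longleftrightarrow> eval_word G u = eval_word G v"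
proof -
  have carrier: "set u \<subseteq> carrier G" "set v \<subseteq> carrier G" "set z \<subseteq> carrier G"
    "set (inv_word G v) \<subseteq> carrier G" using S words inv_word_in_lists[OF S(2) words(2)] by auto
  then have "eval_word G (u @ z @ inv_word G v) = eval_word G u \<otimes> inv (eval_word G v)"
    using z by (simp add: eval_word_append eval_inv_word)
  moreover have "u @ z @ inv_word G v \<in> lists S" using inv_word_in_lists[OF S(2)] words by simp
  ultimately show ?thesis using carrier by (simp add: word_problem_def inv_solve_right')
qed

lemma (in group) eval_word_trivial_padding:
  "s \<in> carrier G \<Longrightarrow> eval_word G (concat (replicate m [s, inv s])) = \<one>"
  by (induction m) simp_all

lemma (in group) ball_subset_spheres:
  assumes S: "S \<subseteq> carrier G" "s \<in> S" "inv s \<in> S"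
  shows "{g. \<exists>w\<in>lists S. length w \<le> m \<and> eval_word G w = g}
    \<subseteq> eval_word G ` {w. set w \<subseteq> S \<and> length w = m} \<union> eval_word G ` {w. set w \<subseteq> S \<and> length w = m - 1}"
proof
  fix g assume "g \<in> {g. \<exists>w\<in>lists S. length w \<le> m \<and> eval_word G w = g}"
  then obtain w where w: "w \<in> lists S" "length w \<le> m" "eval_word G w = g" by blast
  define pad where "pad = concat (replicate ((m - length w) div 2) [s, inv s])"
  have "set pad \<subseteq> S" "length pad = 2 * ((m - length w) div 2)"
    using S unfolding pad_def by (auto simp: length_concat sum_list_replicate)
  moreover have "eval_word G (w @ pad) = g"
    using S w eval_word_trivial_padding[of s] \<open>set pad \<subseteq> S\<close>
    by (auto simp: eval_word_append pad_def subset_eq)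
  ultimately have "w @ pad \<in> {w. set w \<subseteq> S \<and> (length w = m \<or> length w = m - 1)} \<and> eval_word G (w @ pad) = g"
    using w by auto
  then show "g \<in> eval_word G ` {w. set w \<subseteq> S \<and> length w = m} \<union> eval_word G ` {w. set w \<subseteq> S \<and> length w = m - 1}"
    by blast
qed

lemma (in group) injective_words_of_common_length:
  assumes S: "finite S" "S \<subseteq> carrier G" "s \<in> S" "inv s \<in> S"
  obtains A k where "k = m \<or> k = m - 1" "finite A" "A \<subseteq> lists S" "\<forall>u\<in>A. length u = k"
    "inj_on (eval_word G) A" "growth G S m \<le> 2 * card A"
proof -
  define W where "W k = {w. set w \<subseteq> S \<and> length w = k}" for k
  have finW: "finite (W k)" for k unfolding W_def using finite_lists_length_eq[OF S(1)] .
  have "growth G S m \<le> card (eval_word G ` W m \<union> eval_word G ` W (m - 1))"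
    unfolding growth_def W_def using ball_subset_spheres[OF S(2-4)] finW
    by (intro card_mono) (auto simp: W_def)
  also have "\<dots> \<le> card (eval_word G ` W m) + card (eval_word G ` W (m - 1))" by (rule card_Un_le)
  finally have ball: "growth G S m \<le> card (eval_word G ` W m) + card (eval_word G ` W (m - 1))" .
  obtain k where k: "k = m \<or> k = m - 1" "growth G S m \<le> 2 * card (eval_word G ` W k)"
  proof (cases "card (eval_word G ` W (m - 1)) \<le> card (eval_word G ` W m)")
    case True
    then show ?thesis using that[of m] ball by simp
  next
    case False
    then show ?thesis using that[of "m - 1"] ball by simp
  qed
  obtain A where A: "A \<subseteq> W k" "inj_on (eval_word G) A" "eval_word G ` W k = eval_word G ` A"
    using subset_image_inj[of "eval_word G ` W k" "eval_word G" "W k"] by blast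
  show thesis
  proof
    show "finite A" using A(1) finW by (rule finite_subset)
    show "A \<subseteq> lists S" "\<forall>u\<in>A. length u = k" using A(1) by (auto simp: W_def)
    show "growth G S m \<le> 2 * card A" using k(2) A by (simp add: card_image)
  qed (use k A in auto)
qed

lemma exists_power_below_powr:
  fixes q :: nat and y :: real
  assumes "1 \<le> q" "4 + 2 * log 2 (q + 1) \<le> y"
  obtains K :: nat where "real ((q + 1) ^ K) * 4 \<le> 2 powr y" "y / (2 * log 2 (q + 1)) \<le> real K"
proof
  define lq where "lq = log 2 (q + 1)"
  have lq: "lq > 0" using assms(1) unfolding lq_def by simp
  have y: "4 + 2 * lq \<le> y" using assms(2) unfolding lq_def .
  define K where "K = nat \<lfloor>(y - 2) / lq\<rfloor>"
  have "0 \<le> (y - 2) / lq" using y lq by simp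
  then have K_eq: "real K = of_int \<lfloor>(y - 2) / lq\<rfloor>" unfolding K_def by simp
  have "real ((q + 1) ^ K) = (2 powr lq) powr real K"
    unfolding lq_def by (simp add: powr_realpow)
  also have "\<dots> \<le> 2 powr (y - 2)"
  proof -
    have "real K \<le> (y - 2) / lq" using K_eq by linarith
    then have "lq * real K \<le> y - 2" using lq by (simp add: pos_le_divide_eq mult.commute)
    then show ?thesis by (simp add: powr_powr)
  qed
  also have "\<dots> = 2 powr y / 4" by (simp add: powr_diff)
  finally show "real ((q + 1) ^ K) * 4 \<le> 2 powr y" by simp
  have "y / (2 * lq) \<le> (y - 2) / lq - 1" using y lq by (simp add: field_simps)
  also have "\<dots> \<le> real K" using K_eq by linarith
  finally show "y / (2 * log 2 (q + 1)) \<le> real K" unfolding lq_def .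
qed

lemma not_smallo_if_frequently_ge:
  fixes f g :: "nat \<Rightarrow> real"
  assumes "0 < c" and frequently: "\<forall>N. \<exists>n\<ge>N. g n \<noteq> 0 \<and> c * \<bar>g n\<bar> \<le> \<bar>f n\<bar>"
  shows "f \<notin> o(g)"
proof
  assume "f \<in> o(g)"
  then have "eventually (\<lambda>n. norm (f n) \<le> c / 2 * norm (g n)) at_top"
    using \<open>0 < c\<close> by (intro landau_o.smallD) simp_all
  then obtain N where "\<And>n. n \<ge> N \<Longrightarrow> \<bar>f n\<bar> \<le> c / 2 * \<bar>g n\<bar>"
    by (auto simp: eventually_at_top_linorder)
  moreover obtain n where "n \<ge> N" "g n \<noteq> 0" "c * \<bar>g n\<bar> \<le> \<bar>f n\<bar>" using frequently by blast
  ultimately have "c * \<bar>g n\<bar> \<le> c / 2 * \<bar>g n\<bar>" "\<bar>g n\<bar> > 0" by force+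
  then show False using \<open>0 < c\<close> by simp
qed

lemma time_not_smallo_if_lower_bounds:
  fixes T :: "nat \<Rightarrow> nat" and C q :: nat and \<alpha> :: real
  assumes "0 < \<alpha>" "0 < C" "1 \<le> q"
    and bound: "\<And>n K. real ((q + 1) ^ K) * 4 \<le> 2 powr (real n powr \<alpha>) \<Longrightarrow>
      \<exists>l. 4 * (C * n) \<le> l + 2 \<and> l \<le> 4 * (C * n) \<and> C * n * K \<le> T l"
  shows "(\<lambda>n. real (T n)) \<notin> o(\<lambda>n. real n powr (1 + \<alpha>))"
proof -
  define lq where "lq = log 2 (q + 1)"
  have lq: "lq > 0" using assms(3) unfolding lq_def by simp
  define c where "c = real C / (2 * lq * (4 * real C) powr (1 + \<alpha>))"
  have "\<exists>l\<ge>N. real l powr (1 + \<alpha>) \<noteq> 0 \<and> c * \<bar>real l powr (1 + \<alpha>)\<bar> \<le> \<bar>real (T l)\<bar>" for N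
  proof -
    define n where "n = nat \<lceil>max (real N + 1) ((4 + 2 * lq) powr (1 / \<alpha>))\<rceil>"
    have n: "real N + 1 \<le> real n" "(4 + 2 * lq) powr (1 / \<alpha>) \<le> real n"
      unfolding n_def by linarith+
    define y where "y = real n powr \<alpha>"
    have "4 + 2 * lq = ((4 + 2 * lq) powr (1 / \<alpha>)) powr \<alpha>"
      using \<open>0 < \<alpha>\<close> lq by (simp add: powr_powr)
    also have "\<dots> \<le> y" unfolding y_def using n(2) \<open>0 < \<alpha>\<close> by (intro powr_mono2) auto
    finally obtain K where K: "real ((q + 1) ^ K) * 4 \<le> 2 powr y" "y / (2 * lq) \<le> real K"
      using exists_power_below_powr[OF assms(3)] unfolding lq_def by blast
    obtain l where l: "4 * (C * n) \<le> l + 2" "l \<le> 4 * (C * n)" "C * n * K \<le> T l"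
      using bound[where n = n and K = K] K(1) unfolding y_def by auto
    have "n \<le> C * n" using \<open>0 < C\<close> by simp
    then have "N < l" using l(1) n(1) by linarith
    have "real l \<le> real (4 * (C * n))" using l(2) by (simp only: of_nat_le_iff)
    then have "real l \<le> 4 * real C * real n" by simp
    then have "c * real l powr (1 + \<alpha>) \<le> c * (4 * real C * real n) powr (1 + \<alpha>)"
      using lq \<open>0 < C\<close> \<open>0 < \<alpha>\<close> unfolding c_def by (intro mult_left_mono powr_mono2) simp_all
    also have "(4 * real C * real n) powr (1 + \<alpha>) = (4 * real C) powr (1 + \<alpha>) * (real n * y)"
      unfolding y_def using n(1) by (simp add: powr_mult powr_add)
    also have "c * ((4 * real C) powr (1 + \<alpha>) * (real n * y)) = real C * real n * (y / (2 * lq))"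
      using \<open>0 < C\<close> lq unfolding c_def by (simp add: field_simps)
    also have "\<dots> \<le> real C * real n * real K" using K(2) by (intro mult_left_mono) simp_all
    also have "\<dots> = real (C * n * K)" by simp
    also have "\<dots> \<le> real (T l)" using l(3) by (simp only: of_nat_le_iff)
    finally show ?thesis using \<open>N < l\<close> by (intro exI[of _ l]) auto
  qed
  moreover have "c > 0" using lq \<open>0 < C\<close> unfolding c_def by simp
  ultimately show ?thesis by (intro not_smallo_if_frequently_ge) auto
qed

lemma (in group) word_problem_time_lower_bound:
  assumes S: "finite S" "S \<subseteq> carrier G" "\<forall>s\<in>S. inv s \<in> S" "s \<in> S"
    and dec: "decides_in_time S M (word_problem G S) T" and M: "M = (Q, \<Gamma>, \<delta>, q0, qa, qr)"
    and large: "real ((card Q + 1) ^ K) * 4 \<le> real (growth G S m)"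
  shows "\<exists>l. 4 * m \<le> l + 2 \<and> l \<le> 4 * m \<and> m * K \<le> T l"
proof -
  obtain A k where k: "k = m \<or> k = m - 1" and A: "finite A" "A \<subseteq> lists S" "\<forall>u\<in>A. length u = k"
    "inj_on (eval_word G) A" "growth G S m \<le> 2 * card A"
    using injective_words_of_common_length[OF S(1,2,4)] S(3,4) by metis
  define P where "P = concat (replicate m [s, inv s])"
  have "set P \<subseteq> S" "length P = 2 * m"
    using S(3,4) unfolding P_def by (induction m) auto
  moreover have "eval_word G P = \<one>"
    using S(2,4) eval_word_trivial_padding unfolding P_def by blast
  ultimately have P: "P \<in> lists S" "length P = 2 * m" "eval_word G P = \<one>" by auto
  define l where "l = k + length P + k"
  define X where "X = (card Q + 1) ^ K"
  have "u @ P @ inv_word G v \<in> word_problem G S \<longleftrightarrow> u = v" if "u \<in> A" "v \<in> A" for u v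
  proof -
    have "u \<in> lists S" "v \<in> lists S" using A(2) that by auto
    then have "u @ P @ inv_word G v \<in> word_problem G S \<longleftrightarrow> eval_word G u = eval_word G v"
      using word_problem_append_inv_word_iff[OF S(2,3) _ _ P(1,3)] by blast
    then show ?thesis using inj_onD[OF A(4)] that by blast
  qed
  then have "(length P + 1) * (K * (card A - X)) \<le> card A * T l"
    unfolding X_def l_def using A(1-3) P(1) inv_word_in_lists[OF S(3)] subsetD[OF A(2)]
    by (intro fooling_set_time_bound[OF dec M, where x = "\<lambda>u. u" and y = "inv_word G"
          and m = k and m' = k]) auto
  then have bound: "(2 * m + 1) * (K * (card A - X)) \<le> card A * T l" using P(2) by simp
  have "2 * X \<le> card A" using large A(5) unfolding X_def by linarith
  then have "card A \<le> 2 * (card A - X)" by simp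
  then have "card A * ((2 * m + 1) * K) \<le> (2 * m + 1) * K * (2 * (card A - X))"
    by (simp add: mult.commute)
  also have "\<dots> = 2 * ((2 * m + 1) * (K * (card A - X)))" by (simp only: ac_simps)
  also have "\<dots> \<le> card A * (2 * T l)" using bound by simp
  finally have "card A * ((2 * m + 1) * K) \<le> card A * (2 * T l)" .
  moreover have "0 < card A" using \<open>2 * X \<le> card A\<close> zero_less_power[of "card Q + 1" K]
    unfolding X_def by linarith
  ultimately have "(2 * m + 1) * K \<le> 2 * T l" by simp
  then have "m * K \<le> T l" by simp
  moreover have "4 * m \<le> l + 2" "l \<le> 4 * m" using k P(2) unfolding l_def by auto
  ultimately show ?thesis by blast
qed

lemma growth_no_generators: "growth G {} n = 1"
proof -
  have "{g. \<exists>w\<in>lists {}. length w \<le> n \<and> eval_word G w = g} = {\<one>\<^bsub>G\<^esub>}" by auto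
  then show ?thesis unfolding growth_def by simp
qed

theorem mainTheorem5:
  fixes G :: "('a, 'b) monoid_scheme" and S :: "'a set" and \<alpha> :: real
  assumes "group G"
    and "fin_sym_gen_set G S"
    and "0 < \<alpha>" and "\<alpha> \<le> 1"
    and "dominates (\<lambda>n. real (growth G S n)) (\<lambda>n. 2 powr (real n powr \<alpha>))"
  shows "word_problem G S \<notin> DTIME1_o S (\<lambda>n. real n powr (1 + \<alpha>))"
proof
  assume "word_problem G S \<in> DTIME1_o S (\<lambda>n. real n powr (1 + \<alpha>))"
  then obtain M T where dec: "decides_in_time S M (word_problem G S) T"
    and small: "(\<lambda>n. real (T n)) \<in> o(\<lambda>n. real n powr (1 + \<alpha>))"
    unfolding DTIME1_o_def by blast
  obtain Q \<Gamma> \<delta> q0 qa qr where M: "M = (Q, \<Gamma>, \<delta>, q0, qa, qr)" by (cases M) auto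
  have "finite Q" "Q \<noteq> {}" using dec M by (auto simp: decides_in_time_def wf_tm_def)
  then have Q: "1 \<le> card Q" by (simp add: Suc_leI card_gt_0_iff)
  have S: "finite S" "S \<subseteq> carrier G" "\<forall>s\<in>S. inv\<^bsub>G\<^esub> s \<in> S"
    using assms(2) unfolding fin_sym_gen_set_def by auto
  obtain C where C: "0 < C" and dom: "\<And>n. 2 powr (real n powr \<alpha>) \<le> real (growth G S (C * n))"
    using assms(5) unfolding dominates_def by blast
  obtain s where s: "s \<in> S" using dom[of 1] growth_no_generators[of G "C * 1"] by fastforce
  have "(\<lambda>n. real (T n)) \<notin> o(\<lambda>n. real n powr (1 + \<alpha>))"
  proof (rule time_not_smallo_if_lower_bounds[OF assms(3) C Q])
    fix n K assume "real ((card Q + 1) ^ K) * 4 \<le> 2 powr (real n powr \<alpha>)"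
    with dom[of n] show "\<exists>l. 4 * (C * n) \<le> l + 2 \<and> l \<le> 4 * (C * n) \<and> C * n * K \<le> T l"
      using group.word_problem_time_lower_bound[OF assms(1) S s dec M] by force
  qed
  then show False using small by contradiction
qed

end
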